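(* Let $\alpha\in(0,1)$ and $k\in\mathbb{Z}\setminus\{0\}$. Then $\Psi_{\alpha,k}(x)=\sqrt{\frac{2|k|}{\pi(1+\alpha)^3}}\,\|\Phi_{\alpha,k}\|^2_{L^2(\mathbb{R}^+)}\,x^{1+\alpha/2}+o(x^{3/2})$ as $x\downarrow0$.
   Context: On $\mathbb{R}^+$: $\Phi_{\alpha,k}(x)=\sqrt{\frac{\pi(1+\alpha)}{2|k|}}x^{-\alpha/2}e^{-\frac{|k|}{1+\alpha}x^{1+\alpha}}$, $F_{\alpha,k}(x)=\sqrt{\frac{2(1+\alpha)}{\pi|k|}}x^{-\alpha/2}\sinh\big(\frac{|k|}{1+\alpha}x^{1+\alpha}\big)$, and $\Psi_{\alpha,k}(x)=\frac{1}{1+\alpha}\Big(\Phi_{\alpha,k}(x)\int_0^xF_{\alpha,k}(\rho)\Phi_{\alpha,k}(\rho)\mathrm{d}\rho+F_{\alpha,k}(x)\int_x^\infty\Phi_{\alpha,k}(\rho)^2\mathrm{d}\rho\Big)$. *)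

theory Defs
  imports "HOL-Analysis.Analysis" "HOL-Library.Landau_Symbols"
begin

definition Phi :: "real \<Rightarrow> int \<Rightarrow> real \<Rightarrow> real" where
  "Phi \<alpha> k x = sqrt (pi * (1 + \<alpha>) / (2 * \<bar>real_of_int k\<bar>)) * x powr (-\<alpha>/2)
      * exp (- (\<bar>real_of_int k\<bar> / (1 + \<alpha>)) * x powr (1 + \<alpha>))"

definition F :: "real \<Rightarrow> int \<Rightarrow> real \<Rightarrow> real" where
  "F \<alpha> k x = sqrt (2 * (1 + \<alpha>) / (pi * \<bar>real_of_int k\<bar>)) * x powr (-\<alpha>/2)
      * sinh ((\<bar>real_of_int k\<bar> / (1 + \<alpha>)) * x powr (1 + \<alpha>))"

definition Psi :: "real \<Rightarrow> int \<Rightarrow> real \<Rightarrow> real" where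
  "Psi \<alpha> k x = (1 / (1 + \<alpha>)) *
     (Phi \<alpha> k x * (LBINT \<rho>:{0<..<x}. F \<alpha> k \<rho> * Phi \<alpha> k \<rho>)
      + F \<alpha> k x * (LBINT \<rho>:{x<..}. (Phi \<alpha> k \<rho>)\<^sup>2))"

end

theory Submission
  imports Defs "HOL-Real_Asymp.Real_Asymp"
begin

(* Splitting the tail integral at x gives
     (1 + \<alpha>) \<Psi>(x) = \<Phi>(x) \<integral>_0^x F\<Phi> + F(x) (\<parallel>\<Phi>\<parallel>^2 - \<integral>_0^x \<Phi>^2).
   The normalising constants make F\<Phi> = (x / u) sinh(u) e^-u with u = |k| x^(1+\<alpha>) / (1+\<alpha>), so
   0 \<le> F\<Phi> \<le> x and the first term is O(x^(2-\<alpha>/2)). Since \<Phi>^2 \<le> C x^-\<alpha>, the integral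
   \<integral>_0^x \<Phi>^2 is O(x^(1-\<alpha>)), and with F = O(x^(1+\<alpha>/2)) the second correction is O(x^(2-\<alpha>/2))
   as well; both are o(x^(3/2)) because \<alpha> < 1. What remains is F(x) \<parallel>\<Phi>\<parallel>^2, expanded with
   sinh u = u + O(u^3). *)

lemma set_integral_powr_from_0:
  fixes b c :: real
  assumes "b > -1" "c \<ge> 0"
  shows "set_integrable lborel {0<..c} (\<lambda>t. t powr b)"
    and "(LBINT t:{0<..c}. t powr b) = c powr (b + 1) / (b + 1)"
proof -
  have "((\<lambda>t. t powr b) has_integral (c powr (b + 1) / (b + 1))) {0..c}"
    using assms by (rule has_integral_powr_from_0)
  then have integral: "((\<lambda>t. t powr b) has_integral (c powr (b + 1) / (b + 1))) {0<..c}"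
    by (subst (asm) has_integral_spike_set_eq[where T = "{0<..c}"])
       (auto intro!: negligible_subset[OF negligible_empty])
  then have "(\<lambda>t. t powr b) absolutely_integrable_on {0<..c}"
    by (intro nonnegative_absolutely_integrable_1) auto
  then show integrable: "set_integrable lborel {0<..c} (\<lambda>t. t powr b)"
    by (simp add: set_integrable_def integrable_completion)
  show "(LBINT t:{0<..c}. t powr b) = c powr (b + 1) / (b + 1)"
    using set_borel_integral_eq_integral(2)[OF integrable] integral by (simp add: integral_unique)
qed

lemma set_integrable_exp_neg_Ioi:
  fixes a c :: real
  assumes "a > 0"
  shows "set_integrable lborel {c<..} (\<lambda>t. exp (- a * t))"
proof -
  have "(\<lambda>t. exp (- a * t)) absolutely_integrable_on {c..}"
    using integrable_on_exp_minus_to_infinity[OF assms]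
    by (intro nonnegative_absolutely_integrable_1) auto
  then have "set_integrable lborel {c..} (\<lambda>t. exp (- a * t))"
    by (simp add: set_integrable_def integrable_completion)
  then show ?thesis
    by (rule set_integrable_subset) auto
qed

lemma sinh_mult_exp_neg_bounds:
  fixes t :: real
  assumes "t \<ge> 0"
  shows "0 \<le> sinh t * exp (- t)" and "sinh t * exp (- t) \<le> t"
proof -
  have eq: "sinh t * exp (- t) = (1 - exp (- t)) * (1 + exp (- t)) / 2"
    by (simp add: sinh_def field_simps flip: exp_add)
  have "exp (- t) \<le> 1" "1 - t \<le> exp (- t)"
    using assms exp_ge_add_one_self[of "- t"] by simp_all
  then have "(1 - exp (- t)) * (1 + exp (- t)) \<le> t * 2"
    by (intro mult_mono) auto
  with \<open>exp (- t) \<le> 1\<close> show "0 \<le> sinh t * exp (- t)" "sinh t * exp (- t) \<le> t"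
    unfolding eq by simp_all
qed

lemma leading_coefficient_eq:
  fixes a m :: real
  assumes "0 < a" "0 < m"
  shows "a * sqrt (2 * m / (pi * a ^ 3)) = sqrt (2 * a / (pi * m)) * (m / a)"
proof -
  have "a * sqrt (2 * m / (pi * a ^ 3)) = sqrt (a\<^sup>2 * (2 * m / (pi * a ^ 3)))"
    using assms by (simp only: real_sqrt_mult real_sqrt_abs)
  also have "\<dots> = sqrt (2 * a / (pi * m) * (m / a)\<^sup>2)"
    using assms by (simp add: field_simps power2_eq_square power3_eq_cube)
  also have "\<dots> = sqrt (2 * a / (pi * m)) * (m / a)"
    using assms by (simp only: real_sqrt_mult real_sqrt_abs) simp
  finally show ?thesis .
qed

(* No hypothesis k \<noteq> 0 is needed here: for k = 0 both sides vanish because x / 0 = 0. *)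
lemma Phi_sq_eq:
  assumes "-1 < \<alpha>"
  shows "(Phi \<alpha> k x)\<^sup>2 = pi * (1 + \<alpha>) / (2 * \<bar>real_of_int k\<bar>) * x powr (- \<alpha>)
           * exp (- (2 * \<bar>real_of_int k\<bar> / (1 + \<alpha>)) * x powr (1 + \<alpha>))"
proof -
  have "(x powr (- \<alpha> / 2))\<^sup>2 = x powr (- \<alpha>)"
    by (simp add: power2_eq_square flip: powr_add)
  moreover have "(exp (- (\<bar>real_of_int k\<bar> / (1 + \<alpha>)) * x powr (1 + \<alpha>)))\<^sup>2
      = exp (- (2 * \<bar>real_of_int k\<bar> / (1 + \<alpha>)) * x powr (1 + \<alpha>))"
    by (simp add: power2_eq_square flip: exp_add)
  moreover have "(sqrt (pi * (1 + \<alpha>) / (2 * \<bar>real_of_int k\<bar>)))\<^sup>2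
      = pi * (1 + \<alpha>) / (2 * \<bar>real_of_int k\<bar>)"
    using assms by simp
  ultimately show ?thesis
    by (simp add: Phi_def power_mult_distrib)
qed

lemma Phi_sq_le_powr:
  assumes "-1 < \<alpha>" "0 < x"
  shows "(Phi \<alpha> k x)\<^sup>2 \<le> pi * (1 + \<alpha>) / (2 * \<bar>real_of_int k\<bar>) * x powr (- \<alpha>)"
  using assms unfolding Phi_sq_eq[OF assms(1)] by (intro mult_left_le) simp_all

lemma Phi_sq_le_exp:
  assumes "0 \<le> \<alpha>" "1 \<le> x"
  shows "(Phi \<alpha> k x)\<^sup>2
           \<le> pi * (1 + \<alpha>) / (2 * \<bar>real_of_int k\<bar>) * exp (- (2 * \<bar>real_of_int k\<bar> / (1 + \<alpha>)) * x)"
proof -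
  let ?C = "pi * (1 + \<alpha>) / (2 * \<bar>real_of_int k\<bar>)" and ?K = "2 * \<bar>real_of_int k\<bar> / (1 + \<alpha>)"
  have "x \<le> x powr (1 + \<alpha>)"
    using powr_mono[of 1 "1 + \<alpha>" x] assms by simp
  then have "?K * x \<le> ?K * x powr (1 + \<alpha>)"
    using assms by (intro mult_left_mono) auto
  then have decay: "exp (- ?K * x powr (1 + \<alpha>)) \<le> exp (- ?K * x)"
    by simp
  have "x powr (- \<alpha>) \<le> 1"
    using assms by (simp add: powr_minus inverse_le_1_iff ge_one_powr_ge_zero)
  have "(Phi \<alpha> k x)\<^sup>2 = ?C * x powr (- \<alpha>) * exp (- ?K * x powr (1 + \<alpha>))"
    using assms by (intro Phi_sq_eq) simp
  also have "\<dots> \<le> ?C * 1 * exp (- ?K * x)"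
    using assms by (intro mult_mono mult_left_mono decay \<open>x powr (- \<alpha>) \<le> 1\<close>) auto
  finally show ?thesis
    by simp
qed

lemma F_mult_Phi_eq:
  assumes "-1 < \<alpha>"
  shows "F \<alpha> k x * Phi \<alpha> k x = (1 + \<alpha>) / \<bar>real_of_int k\<bar> * x powr (- \<alpha>)
           * (sinh (\<bar>real_of_int k\<bar> / (1 + \<alpha>) * x powr (1 + \<alpha>))
              * exp (- (\<bar>real_of_int k\<bar> / (1 + \<alpha>) * x powr (1 + \<alpha>))))"
proof -
  have "sqrt (2 * (1 + \<alpha>) / (pi * \<bar>real_of_int k\<bar>)) * sqrt (pi * (1 + \<alpha>) / (2 * \<bar>real_of_int k\<bar>))
      = sqrt (((1 + \<alpha>) / \<bar>real_of_int k\<bar>)\<^sup>2)"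
    unfolding real_sqrt_mult [symmetric]
    by (cases "k = 0") (simp_all add: field_simps power2_eq_square)
  also have "\<dots> = (1 + \<alpha>) / \<bar>real_of_int k\<bar>"
    using assms by simp
  finally have constants:
    "sqrt (2 * (1 + \<alpha>) / (pi * \<bar>real_of_int k\<bar>)) * sqrt (pi * (1 + \<alpha>) / (2 * \<bar>real_of_int k\<bar>))
      = (1 + \<alpha>) / \<bar>real_of_int k\<bar>" .
  have powers: "x powr (- \<alpha> / 2) * x powr (- \<alpha> / 2) = x powr (- \<alpha>)"
    by (simp flip: powr_add)
  have "F \<alpha> k x * Phi \<alpha> k x
      = (sqrt (2 * (1 + \<alpha>) / (pi * \<bar>real_of_int k\<bar>)) * sqrt (pi * (1 + \<alpha>) / (2 * \<bar>real_of_int k\<bar>)))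
        * (x powr (- \<alpha> / 2) * x powr (- \<alpha> / 2))
        * (sinh (\<bar>real_of_int k\<bar> / (1 + \<alpha>) * x powr (1 + \<alpha>))
           * exp (- (\<bar>real_of_int k\<bar> / (1 + \<alpha>) * x powr (1 + \<alpha>))))"
    unfolding F_def Phi_def by (simp add: ac_simps)
  then show ?thesis
    unfolding constants powers .
qed

lemma F_mult_Phi_bounds:
  assumes "-1 < \<alpha>" "0 < x"
  shows "0 \<le> F \<alpha> k x * Phi \<alpha> k x" and "F \<alpha> k x * Phi \<alpha> k x \<le> x"
proof -
  let ?u = "\<bar>real_of_int k\<bar> / (1 + \<alpha>) * x powr (1 + \<alpha>)"
  have u: "0 \<le> ?u"
    using assms by simp
  have c: "0 \<le> (1 + \<alpha>) / \<bar>real_of_int k\<bar> * x powr (- \<alpha>)"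
    using assms by simp
  show "0 \<le> F \<alpha> k x * Phi \<alpha> k x"
    unfolding F_mult_Phi_eq[OF assms(1)] using c sinh_mult_exp_neg_bounds(1)[OF u]
    by (rule mult_nonneg_nonneg)
  have "F \<alpha> k x * Phi \<alpha> k x \<le> (1 + \<alpha>) / \<bar>real_of_int k\<bar> * x powr (- \<alpha>) * ?u"
    unfolding F_mult_Phi_eq[OF assms(1)] using sinh_mult_exp_neg_bounds(2)[OF u] c
    by (rule mult_left_mono)
  also have "\<dots> \<le> x"
  proof (cases "k = 0")
    case False
    have "(1 + \<alpha>) / \<bar>real_of_int k\<bar> * x powr (- \<alpha>) * ?u
        = ((1 + \<alpha>) / \<bar>real_of_int k\<bar> * (\<bar>real_of_int k\<bar> / (1 + \<alpha>)))
          * (x powr (- \<alpha>) * x powr (1 + \<alpha>))"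
      by (simp only: ac_simps)
    also have "\<dots> = x"
      using False assms by (simp flip: powr_add)
    finally show ?thesis
      by simp
  qed (use assms in simp)
  finally show "F \<alpha> k x * Phi \<alpha> k x \<le> x" .
qed

lemma Phi_bigo:
  assumes "-1 < \<alpha>"
  shows "Phi \<alpha> k \<in> O[at_right 0](\<lambda>x. x powr (- \<alpha> / 2))"
  using assms unfolding Phi_def by real_asymp

lemma F_bigo:
  assumes "-1 < \<alpha>"
  shows "F \<alpha> k \<in> O[at_right 0](\<lambda>x. x powr (1 + \<alpha> / 2))"
  using assms unfolding F_def by real_asymp

lemma set_integrable_Phi_sq:
  assumes "0 \<le> \<alpha>" "\<alpha> < 1" "k \<noteq> 0"
  shows "set_integrable lborel {0<..} (\<lambda>x. (Phi \<alpha> k x)\<^sup>2)"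
proof -
  let ?C = "pi * (1 + \<alpha>) / (2 * \<bar>real_of_int k\<bar>)" and ?K = "2 * \<bar>real_of_int k\<bar> / (1 + \<alpha>)"
  have [measurable]: "(\<lambda>x. (Phi \<alpha> k x)\<^sup>2) \<in> borel_measurable borel"
    unfolding Phi_def by measurable
  have near_0: "set_integrable lborel {0<..1} (\<lambda>x. (Phi \<alpha> k x)\<^sup>2)"
  proof (rule set_integrable_bound)
    show "set_integrable lborel {0<..1} (\<lambda>x. ?C * x powr (- \<alpha>))"
      using set_integral_powr_from_0(1)[of "- \<alpha>" 1] assms by simp
    show "AE x in lborel. x \<in> {0<..1} \<longrightarrow> norm ((Phi \<alpha> k x)\<^sup>2) \<le> norm (?C * x powr (- \<alpha>))"
      using Phi_sq_le_powr[of \<alpha>] assms by (auto intro!: AE_I2)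
  qed (simp add: set_borel_measurable_def)
  have near_infinity: "set_integrable lborel {1<..} (\<lambda>x. (Phi \<alpha> k x)\<^sup>2)"
  proof (rule set_integrable_bound)
    show "set_integrable lborel {1<..} (\<lambda>x. ?C * exp (- ?K * x))"
      using set_integrable_exp_neg_Ioi[of ?K] assms by simp
    show "AE x in lborel. x \<in> {1<..} \<longrightarrow> norm ((Phi \<alpha> k x)\<^sup>2) \<le> norm (?C * exp (- ?K * x))"
      using Phi_sq_le_exp[of \<alpha>] assms by (auto intro!: AE_I2)
  qed (simp add: set_borel_measurable_def)
  have "set_integrable lborel ({0<..1} \<union> {1<..}) (\<lambda>x. (Phi \<alpha> k x)\<^sup>2)"
    using near_0 near_infinity by (rule set_integrable_Un) auto
  also have "{0<..1} \<union> {1<..} = {0::real<..}"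
    by auto
  finally show ?thesis .
qed

lemma LBINT_Phi_sq_Ioc_bigo:
  assumes "-1 < \<alpha>" "\<alpha> < 1"
  shows "(\<lambda>x. LBINT \<rho>:{0<..x}. (Phi \<alpha> k \<rho>)\<^sup>2) \<in> O[at_right 0](\<lambda>x. x powr (1 - \<alpha>))"
proof (rule bigoI)
  let ?C = "pi * (1 + \<alpha>) / (2 * \<bar>real_of_int k\<bar>)"
  show "\<forall>\<^sub>F x in at_right 0.
      norm (LBINT \<rho>:{0<..x}. (Phi \<alpha> k \<rho>)\<^sup>2) \<le> ?C / (1 - \<alpha>) * norm (x powr (1 - \<alpha>))"
    using eventually_at_right_less
  proof eventually_elim
    case (elim x)
    have "0 \<le> (LBINT \<rho>:{0<..x}. (Phi \<alpha> k \<rho>)\<^sup>2)"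
      unfolding set_lebesgue_integral_def by (intro integral_nonneg_AE AE_I2) simp
    moreover have "(LBINT \<rho>:{0<..x}. (Phi \<alpha> k \<rho>)\<^sup>2) \<le> (LBINT \<rho>:{0<..x}. ?C * \<rho> powr (- \<alpha>))"
      unfolding set_lebesgue_integral_def
    proof (rule integral_mono')
      have "set_integrable lborel {0<..x} (\<lambda>\<rho>. ?C * \<rho> powr (- \<alpha>))"
        using assms elim by (intro set_integrable_mult_right set_integral_powr_from_0(1)) auto
      then show "integrable lborel (\<lambda>\<rho>. indicator {0<..x} \<rho> *\<^sub>R (?C * \<rho> powr (- \<alpha>)))"
        unfolding set_integrable_def .
    qed (use Phi_sq_le_powr[OF assms(1)] assms in \<open>auto simp: indicator_def\<close>)
    moreover have "(LBINT \<rho>:{0<..x}. ?C * \<rho> powr (- \<alpha>)) = ?C / (1 - \<alpha>) * x powr (1 - \<alpha>)"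
      using set_integral_powr_from_0(2)[of "- \<alpha>" x] assms elim by simp
    ultimately show ?case
      by simp
  qed
qed

lemma LBINT_F_mult_Phi_bigo:
  assumes "-1 < \<alpha>"
  shows "(\<lambda>x. LBINT \<rho>:{0<..<x}. F \<alpha> k \<rho> * Phi \<alpha> k \<rho>) \<in> O[at_right 0](\<lambda>x. x\<^sup>2)"
proof (rule bigoI)
  show "\<forall>\<^sub>F x in at_right 0. norm (LBINT \<rho>:{0<..<x}. F \<alpha> k \<rho> * Phi \<alpha> k \<rho>) \<le> 1 * norm (x\<^sup>2)"
    using eventually_at_right_less
  proof eventually_elim
    case (elim x)
    have pointwise: "F \<alpha> k \<rho> * Phi \<alpha> k \<rho> \<le> x" if "\<rho> \<in> {0<..<x}" for \<rho>
      using F_mult_Phi_bounds(2)[OF assms, where k = k and x = \<rho>] that by auto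
    have "0 \<le> (LBINT \<rho>:{0<..<x}. F \<alpha> k \<rho> * Phi \<alpha> k \<rho>)"
      unfolding set_lebesgue_integral_def
      using F_mult_Phi_bounds(1)[OF assms]
      by (intro integral_nonneg_AE AE_I2) (simp add: indicator_def)
    moreover have "(LBINT \<rho>:{0<..<x}. F \<alpha> k \<rho> * Phi \<alpha> k \<rho>) \<le> (LBINT \<rho>:{0<..<x}. x)"
      unfolding set_lebesgue_integral_def
    proof (rule integral_mono')
      show "integrable lborel (\<lambda>\<rho>. indicator {0<..<x} \<rho> *\<^sub>R x)"
        using elim by (simp add: integrable_indicator_iff emeasure_lborel_Ioo)
    qed (use pointwise elim in \<open>auto simp: indicator_def\<close>)
    moreover have "(LBINT \<rho>:{0<..<x}. x) = x\<^sup>2"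
      using elim by (subst set_integral_const) (auto simp: power2_eq_square)
    ultimately show ?case
      by simp
  qed
qed

lemma Psi_eq:
  assumes "0 \<le> \<alpha>" "\<alpha> < 1" "k \<noteq> 0" "0 < x"
  shows "Psi \<alpha> k x = (Phi \<alpha> k x * (LBINT \<rho>:{0<..<x}. F \<alpha> k \<rho> * Phi \<alpha> k \<rho>)
           + F \<alpha> k x * ((LBINT \<rho>:{0<..}. (Phi \<alpha> k \<rho>)\<^sup>2) - (LBINT \<rho>:{0<..x}. (Phi \<alpha> k \<rho>)\<^sup>2)))
           / (1 + \<alpha>)"
proof -
  have "{0<..} = {0<..x} \<union> {x<..}"
    using assms by auto
  moreover have "(LBINT \<rho>:{0<..x} \<union> {x<..}. (Phi \<alpha> k \<rho>)\<^sup>2)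
      = (LBINT \<rho>:{0<..x}. (Phi \<alpha> k \<rho>)\<^sup>2) + (LBINT \<rho>:{x<..}. (Phi \<alpha> k \<rho>)\<^sup>2)"
    using set_integrable_Phi_sq[OF assms(1-3)] assms(4)
    by (intro set_integral_Un) (auto elim: set_integrable_subset)
  ultimately have "(LBINT \<rho>:{0<..}. (Phi \<alpha> k \<rho>)\<^sup>2)
      = (LBINT \<rho>:{0<..x}. (Phi \<alpha> k \<rho>)\<^sup>2) + (LBINT \<rho>:{x<..}. (Phi \<alpha> k \<rho>)\<^sup>2)"
    by simp
  then show ?thesis
    unfolding Psi_def by simp
qed

lemma F_minus_leading_term_smallo:
  assumes "0 < \<alpha>" "\<alpha> < 1" "k \<noteq> 0"
  shows "(\<lambda>x. F \<alpha> k x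
             - (1 + \<alpha>) * sqrt (2 * \<bar>real_of_int k\<bar> / (pi * (1 + \<alpha>) ^ 3)) * x powr (1 + \<alpha>/2))
           \<in> o[at_right 0](\<lambda>x. x powr (3/2))"
proof -
  define K where "K = \<bar>real_of_int k\<bar> / (1 + \<alpha>)"
  define c where "c = sqrt (2 * (1 + \<alpha>) / (pi * \<bar>real_of_int k\<bar>))"
  have "K > 0"
    using assms by (simp add: K_def)
  then have "(\<lambda>x. c * (x powr (- \<alpha> / 2) * (sinh (K * x powr (1 + \<alpha>)) - K * x powr (1 + \<alpha>))))
      \<in> o[at_right 0](\<lambda>x. x powr (3/2))"
    using assms by real_asymp
  moreover have "(1 + \<alpha>) * sqrt (2 * \<bar>real_of_int k\<bar> / (pi * (1 + \<alpha>) ^ 3)) = c * K"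
    using assms leading_coefficient_eq[of "1 + \<alpha>" "\<bar>real_of_int k\<bar>"] by (simp add: c_def K_def)
  moreover have "F \<alpha> k x - c * K * x powr (1 + \<alpha>/2)
      = c * (x powr (- \<alpha> / 2) * (sinh (K * x powr (1 + \<alpha>)) - K * x powr (1 + \<alpha>)))" for x
  proof -
    have "x powr (1 + \<alpha>/2) = x powr (- \<alpha> / 2) * x powr (1 + \<alpha>)"
      by (simp add: add.commute flip: powr_add)
    then show ?thesis
      unfolding F_def K_def c_def by (simp add: algebra_simps)
  qed
  ultimately show ?thesis
    by simp
qed

lemma Phi_mult_LBINT_F_Phi_smallo:
  assumes "-1 < \<alpha>" "\<alpha> < 1"
  shows "(\<lambda>x. Phi \<alpha> k x * (LBINT \<rho>:{0<..<x}. F \<alpha> k \<rho> * Phi \<alpha> k \<rho>))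
           \<in> o[at_right 0](\<lambda>x. x powr (3/2))"
proof (rule landau_o.big_small_trans)
  show "(\<lambda>x. Phi \<alpha> k x * (LBINT \<rho>:{0<..<x}. F \<alpha> k \<rho> * Phi \<alpha> k \<rho>))
      \<in> O[at_right 0](\<lambda>x. x powr (- \<alpha> / 2) * x\<^sup>2)"
    using assms(1) by (intro landau_o.big.mult Phi_bigo LBINT_F_mult_Phi_bigo)
  show "(\<lambda>x. x powr (- \<alpha> / 2) * x\<^sup>2) \<in> o[at_right 0](\<lambda>x. x powr (3/2))"
    using assms by real_asymp
qed

lemma F_mult_LBINT_Phi_sq_smallo:
  assumes "-1 < \<alpha>" "\<alpha> < 1"
  shows "(\<lambda>x. F \<alpha> k x * (LBINT \<rho>:{0<..x}. (Phi \<alpha> k \<rho>)\<^sup>2))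
           \<in> o[at_right 0](\<lambda>x. x powr (3/2))"
proof (rule landau_o.big_small_trans)
  show "(\<lambda>x. F \<alpha> k x * (LBINT \<rho>:{0<..x}. (Phi \<alpha> k \<rho>)\<^sup>2))
      \<in> O[at_right 0](\<lambda>x. x powr (1 + \<alpha> / 2) * x powr (1 - \<alpha>))"
    using assms by (intro landau_o.big.mult F_bigo LBINT_Phi_sq_Ioc_bigo)
  show "(\<lambda>x. x powr (1 + \<alpha> / 2) * x powr (1 - \<alpha>)) \<in> o[at_right 0](\<lambda>x. x powr (3/2))"
    using assms by real_asymp
qed

theorem lemma3p7:
  fixes \<alpha> :: real and k :: int
  assumes "0 < \<alpha>" and "\<alpha> < 1" and "k \<noteq> 0"
  shows "(\<lambda>x. Psi \<alpha> k x
            - sqrt (2 * \<bar>real_of_int k\<bar> / (pi * (1 + \<alpha>) ^ 3))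
              * (LBINT \<rho>:{0<..}. (Phi \<alpha> k \<rho>)\<^sup>2) * x powr (1 + \<alpha>/2))
         \<in> o[at_right (0::real)](\<lambda>x. x powr (3/2))"
proof -
  let ?c = "sqrt (2 * \<bar>real_of_int k\<bar> / (pi * (1 + \<alpha>) ^ 3))"
  let ?N = "LBINT \<rho>:{0<..}. (Phi \<alpha> k \<rho>)\<^sup>2"
  let ?I0 = "\<lambda>x. LBINT \<rho>:{0<..x}. (Phi \<alpha> k \<rho>)\<^sup>2"
  let ?I1 = "\<lambda>x. LBINT \<rho>:{0<..<x}. F \<alpha> k \<rho> * Phi \<alpha> k \<rho>"
  have "(\<lambda>x. Phi \<alpha> k x * ?I1 x - F \<alpha> k x * ?I0 x
           + ?N * (F \<alpha> k x - (1 + \<alpha>) * ?c * x powr (1 + \<alpha>/2)))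
      \<in> o[at_right 0](\<lambda>x. x powr (3/2))"
    using assms Phi_mult_LBINT_F_Phi_smallo[of \<alpha> k] F_mult_LBINT_Phi_sq_smallo[of \<alpha> k]
      F_minus_leading_term_smallo[of \<alpha> k]
    by (intro sum_in_smallo) simp_all
  then have remainder_smallo: "(\<lambda>x. (Phi \<alpha> k x * ?I1 x - F \<alpha> k x * ?I0 x
           + ?N * (F \<alpha> k x - (1 + \<alpha>) * ?c * x powr (1 + \<alpha>/2))) / (1 + \<alpha>))
      \<in> o[at_right 0](\<lambda>x. x powr (3/2))"
    by (rule landau_o.small.cdiv_in_iff'[THEN iffD2, rotated]) (use assms in simp)
  have "\<forall>\<^sub>F x in at_right 0.
      (Phi \<alpha> k x * ?I1 x - F \<alpha> k x * ?I0 x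
        + ?N * (F \<alpha> k x - (1 + \<alpha>) * ?c * x powr (1 + \<alpha>/2))) / (1 + \<alpha>)
      = Psi \<alpha> k x - ?c * ?N * x powr (1 + \<alpha>/2)"
    using eventually_at_right_less by eventually_elim (use assms in \<open>simp add: Psi_eq field_simps\<close>)
  then show ?thesis
    using remainder_smallo by (rule landau_o.small.in_cong[THEN iffD1])
qed

end
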